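(* If $(\mathcal{C},P)$ is a heaco, then for every object $A$ the poset $P(A)^{op}$ is a Heyting algebra; in particular every $P(A)$ has finite joins.
   Context: A doctrine is a pair $(\mathcal{C},P)$, $\mathcal{C}$ a category with finite products, $P:\mathcal{C}^{op}\to\mathbf{Pos}$ a functor, $f^*=P(f)$; primary: each $P(A)$ has binary meets preserved by each $f^*$. Elementary: primary and for every $A$ there is $\delta_A\in P(A\times A)$ such that for every $X$ the assignment $\psi\mapsto\langle\pi_1,\pi_2\rangle^*\psi\wedge\langle\pi_2,\pi_3\rangle^*\delta_A$ is a left adjoint $P(X\times A)\to P(X\times A\times A)$ to $(id_X\times\Delta_A)^*$. Graph of $f:X\to A$: $\mathcal{G}(f)=(f\times id_A)^*\delta_A$. Stable initial object: initial $0$ with $X\times0\cong0$ for all $X$. AC: for every $A$ not stable initial and every $\Gamma$, $\pi_\Gamma^*$ ($\pi_\Gamma:\Gamma\times A\to\Gamma$) has a left adjoint $\Sigma_{\pi_\Gamma}$ and each $\psi\in P(\Gamma\times A)$ has a chosen $\epsilon_\psi:\Gamma\to A$ with $\Sigma_{\pi_\Gamma}\psi=\langle id_\Gamma,\epsilon_\psi\rangle^*\psi$ (also with factors swapped). Co-comprehension: each $P(A)$ has a bottom and each $\alpha$ has $\lceil\alpha\rceil:\{\alpha\}^o\to A$ with $\lceil\alpha\rceil^*\alpha=\bot$, universal among $f$ with $f^*\alpha=\bot$; full if $\lceil\beta\rceil$ factoring through $\lceil\alpha\rceil$ implies $\alpha\le\beta$. An eaco is an elementary doctrine with full co-comprehension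 satisfying AC such that for every $f:X\to A$, $\alpha\in P(A)$: $f^*\langle\epsilon_{\mathcal{G}(\lceil\alpha\rceil)},id_A\rangle^*\mathcal{G}(\lceil\alpha\rceil)=\langle\epsilon_{\mathcal{G}(\lceil f^*\alpha\rceil)},id_X\rangle^*\mathcal{G}(\lceil f^*\alpha\rceil)$. Higher order: for every $A$ there are $\mathbb{P}(A)$ and $\in_A\in P(A\times\mathbb{P}(A))$ such that every $\phi\in P(A\times Y)$ equals $(id_A\times\chi_\phi)^*\in_A$ for some $\chi_\phi:Y\to\mathbb{P}(A)$. A heaco is a higher order eaco. *)

theory Defs
  imports Main
begin

definition po_on :: "'p set \<Rightarrow> ('p \<Rightarrow> 'p \<Rightarrow> bool) \<Rightarrow> bool" where
  "po_on S r \<longleftrightarrow> (\<forall>x\<in>S. r x x) \<and> (\<forall>x\<in>S. \<forall>y\<in>S. r x y \<and> r y x \<longrightarrow> x = y)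
     \<and> (\<forall>x\<in>S. \<forall>y\<in>S. \<forall>z\<in>S. r x y \<and> r y z \<longrightarrow> r x z)"

definition po_glb :: "'p set \<Rightarrow> ('p \<Rightarrow> 'p \<Rightarrow> bool) \<Rightarrow> 'p \<Rightarrow> 'p \<Rightarrow> 'p \<Rightarrow> bool" where
  "po_glb S r x y z \<longleftrightarrow> z \<in> S \<and> r z x \<and> r z y \<and> (\<forall>w\<in>S. r w x \<and> r w y \<longrightarrow> r w z)"

definition po_lub :: "'p set \<Rightarrow> ('p \<Rightarrow> 'p \<Rightarrow> bool) \<Rightarrow> 'p \<Rightarrow> 'p \<Rightarrow> 'p \<Rightarrow> bool" where
  "po_lub S r x y z \<longleftrightarrow> po_glb S (\<lambda>a b. r b a) x y z"

definition po_top :: "'p set \<Rightarrow> ('p \<Rightarrow> 'p \<Rightarrow> bool) \<Rightarrow> 'p \<Rightarrow> bool" where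
  "po_top S r t \<longleftrightarrow> t \<in> S \<and> (\<forall>x\<in>S. r x t)"

definition po_bot :: "'p set \<Rightarrow> ('p \<Rightarrow> 'p \<Rightarrow> bool) \<Rightarrow> 'p \<Rightarrow> bool" where
  "po_bot S r b \<longleftrightarrow> b \<in> S \<and> (\<forall>x\<in>S. r b x)"

definition heyting_algebra :: "'p set \<Rightarrow> ('p \<Rightarrow> 'p \<Rightarrow> bool) \<Rightarrow> bool" where
  "heyting_algebra S r \<longleftrightarrow> po_on S r
     \<and> (\<exists>t. po_top S r t) \<and> (\<exists>b. po_bot S r b)
     \<and> (\<forall>x\<in>S. \<forall>y\<in>S. \<exists>z. po_glb S r x y z)
     \<and> (\<forall>x\<in>S. \<forall>y\<in>S. \<exists>z. po_lub S r x y z)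
     \<and> (\<forall>x\<in>S. \<forall>y\<in>S. \<exists>z\<in>S. \<forall>w\<in>S.
           (\<forall>m. po_glb S r w x m \<longrightarrow> r m y) \<longleftrightarrow> r w z)"

definition has_finite_joins :: "'p set \<Rightarrow> ('p \<Rightarrow> 'p \<Rightarrow> bool) \<Rightarrow> bool" where
  "has_finite_joins S r \<longleftrightarrow> (\<exists>b. po_bot S r b) \<and> (\<forall>x\<in>S. \<forall>y\<in>S. \<exists>z. po_lub S r x y z)"

record ('o, 'm) fpcat =
  Ar :: "'m set"
  c_dom :: "'m \<Rightarrow> 'o"
  c_cod :: "'m \<Rightarrow> 'o"
  cmp :: "'m \<Rightarrow> 'm \<Rightarrow> 'm"      (* cmp C g f = g \<circ> f *)
  idn :: "'o \<Rightarrow> 'm"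
  trm :: "'o"
  trm_ar :: "'o \<Rightarrow> 'm"
  prd :: "'o \<Rightarrow> 'o \<Rightarrow> 'o"
  pr1 :: "'o \<Rightarrow> 'o \<Rightarrow> 'm"
  pr2 :: "'o \<Rightarrow> 'o \<Rightarrow> 'm"
  pair :: "'m \<Rightarrow> 'm \<Rightarrow> 'm"

definition hom :: "('o, 'm, 'z) fpcat_scheme \<Rightarrow> 'o \<Rightarrow> 'o \<Rightarrow> 'm set" where
  "hom C X Y = {f \<in> Ar C. c_dom C f = X \<and> c_cod C f = Y}"

definition is_fpcat :: "('o, 'm, 'z) fpcat_scheme \<Rightarrow> bool" where
  "is_fpcat C \<longleftrightarrow>
     (\<forall>X. idn C X \<in> hom C X X)
   \<and> (\<forall>f\<in>Ar C. \<forall>g\<in>Ar C. c_cod C f = c_dom C g \<longrightarrow>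
        cmp C g f \<in> hom C (c_dom C f) (c_cod C g))
   \<and> (\<forall>f\<in>Ar C. \<forall>g\<in>Ar C. \<forall>h\<in>Ar C. c_cod C f = c_dom C g \<and> c_cod C g = c_dom C h \<longrightarrow>
        cmp C h (cmp C g f) = cmp C (cmp C h g) f)
   \<and> (\<forall>f\<in>Ar C. cmp C f (idn C (c_dom C f)) = f \<and> cmp C (idn C (c_cod C f)) f = f)
   \<and> (\<forall>X. trm_ar C X \<in> hom C X (trm C) \<and> (\<forall>h\<in>hom C X (trm C). h = trm_ar C X))
   \<and> (\<forall>A B. pr1 C A B \<in> hom C (prd C A B) A \<and> pr2 C A B \<in> hom C (prd C A B) B)
   \<and> (\<forall>Z A B f g. f \<in> hom C Z A \<and> g \<in> hom C Z B \<longrightarrow>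
        pair C f g \<in> hom C Z (prd C A B)
        \<and> cmp C (pr1 C A B) (pair C f g) = f \<and> cmp C (pr2 C A B) (pair C f g) = g)
   \<and> (\<forall>Z A B h. h \<in> hom C Z (prd C A B) \<longrightarrow>
        h = pair C (cmp C (pr1 C A B) h) (cmp C (pr2 C A B) h))"

definition c_iso :: "('o, 'm, 'z) fpcat_scheme \<Rightarrow> 'o \<Rightarrow> 'o \<Rightarrow> bool" where
  "c_iso C X Y \<longleftrightarrow> (\<exists>f g. f \<in> hom C X Y \<and> g \<in> hom C Y X
      \<and> cmp C g f = idn C X \<and> cmp C f g = idn C Y)"

definition c_initial :: "('o, 'm, 'z) fpcat_scheme \<Rightarrow> 'o \<Rightarrow> bool" where
  "c_initial C Z \<longleftrightarrow> (\<forall>X. \<exists>!h. h \<in> hom C Z X)"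

definition stable_initial :: "('o, 'm, 'z) fpcat_scheme \<Rightarrow> 'o \<Rightarrow> bool" where
  "stable_initial C Z \<longleftrightarrow> c_initial C Z \<and> (\<forall>X. c_iso C (prd C X Z) Z)"

record ('o, 'm, 'p) doctrine = "('o, 'm) fpcat" +
  Pr :: "'o \<Rightarrow> 'p set"                 (* underlying set of P(A) *)
  leq :: "'o \<Rightarrow> 'p \<Rightarrow> 'p \<Rightarrow> bool"
  rdx :: "'m \<Rightarrow> 'p \<Rightarrow> 'p"             (* f^* = P(f) *)

definition is_doctrine :: "('o, 'm, 'p, 'z) doctrine_scheme \<Rightarrow> bool" where
  "is_doctrine D \<longleftrightarrow> is_fpcat D
   \<and> (\<forall>A. po_on (Pr D A) (leq D A))
   \<and> (\<forall>f\<in>Ar D. \<forall>a\<in>Pr D (c_cod D f). rdx D f a \<in> Pr D (c_dom D f))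
   \<and> (\<forall>f\<in>Ar D. \<forall>a\<in>Pr D (c_cod D f). \<forall>b\<in>Pr D (c_cod D f).
        leq D (c_cod D f) a b \<longrightarrow> leq D (c_dom D f) (rdx D f a) (rdx D f b))
   \<and> (\<forall>X. \<forall>a\<in>Pr D X. rdx D (idn D X) a = a)
   \<and> (\<forall>f\<in>Ar D. \<forall>g\<in>Ar D. c_cod D f = c_dom D g \<longrightarrow>
        (\<forall>a\<in>Pr D (c_cod D g). rdx D (cmp D g f) a = rdx D f (rdx D g a)))"

definition meetP :: "('o, 'm, 'p, 'z) doctrine_scheme \<Rightarrow> 'o \<Rightarrow> 'p \<Rightarrow> 'p \<Rightarrow> 'p" where
  "meetP D A x y = (THE z. po_glb (Pr D A) (leq D A) x y z)"

definition botP :: "('o, 'm, 'p, 'z) doctrine_scheme \<Rightarrow> 'o \<Rightarrow> 'p" where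
  "botP D A = (THE b. po_bot (Pr D A) (leq D A) b)"

definition is_primary :: "('o, 'm, 'p, 'z) doctrine_scheme \<Rightarrow> bool" where
  "is_primary D \<longleftrightarrow> is_doctrine D
   \<and> (\<forall>A. \<forall>x\<in>Pr D A. \<forall>y\<in>Pr D A. \<exists>z. po_glb (Pr D A) (leq D A) x y z)
   \<and> (\<forall>f\<in>Ar D. \<forall>x\<in>Pr D (c_cod D f). \<forall>y\<in>Pr D (c_cod D f).
        rdx D f (meetP D (c_cod D f) x y) = meetP D (c_dom D f) (rdx D f x) (rdx D f y))"

text \<open>Elementary doctrine; X \<times> A \<times> A is bracketed as (X \<times> A) \<times> A.
  Then \<langle>\<pi>1,\<pi>2\<rangle> is the first projection of (X\<times>A)\<times>A, \<langle>\<pi>2,\<pi>3\<rangle> = \<langle>pr2\<circ>pr1, pr2\<rangle>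
  and id_X \<times> \<Delta>_A = \<langle>id_{X\<times>A}, pr2\<rangle>.\<close>
definition is_elementary :: "('o, 'm, 'p, 'z) doctrine_scheme \<Rightarrow> ('o \<Rightarrow> 'p) \<Rightarrow> bool" where
  "is_elementary D \<delta> \<longleftrightarrow> is_primary D
   \<and> (\<forall>A. \<delta> A \<in> Pr D (prd D A A))
   \<and> (\<forall>A X.
       (let XA = prd D X A; XAA = prd D XA A;
            p12 = pr1 D XA A;
            p23 = pair D (cmp D (pr2 D X A) (pr1 D XA A)) (pr2 D XA A);
            d = pair D (idn D XA) (pr2 D X A)
        in \<forall>\<psi>\<in>Pr D XA. \<forall>\<phi>\<in>Pr D XAA.
             leq D XAA (meetP D XAA (rdx D p12 \<psi>) (rdx D p23 (\<delta> A))) \<phi>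
             \<longleftrightarrow> leq D XA \<psi> (rdx D d \<phi>)))"

definition grph :: "('o, 'm, 'p, 'z) doctrine_scheme \<Rightarrow> ('o \<Rightarrow> 'p) \<Rightarrow> 'm \<Rightarrow> 'p" where
  "grph D \<delta> f = rdx D (pair D (cmp D f (pr1 D (c_dom D f) (c_cod D f))) (pr2 D (c_dom D f) (c_cod D f)))
                   (\<delta> (c_cod D f))"

text \<open>AC. eps1 \<Gamma> A \<psi> is the chosen witness for \<psi> \<in> P(\<Gamma> \<times> A), eps2 A \<Gamma> \<psi> the
  chosen witness for \<psi> \<in> P(A \<times> \<Gamma>) (factors swapped). The left adjoint condition is
  stated pointwise: \<Sigma>\<psi> = \<langle>id,\<epsilon>_\<psi>\<rangle>^*\<psi> is left adjoint to \<pi>_\<Gamma>^*.\<close>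
definition has_AC :: "('o, 'm, 'p, 'z) doctrine_scheme \<Rightarrow> ('o \<Rightarrow> 'o \<Rightarrow> 'p \<Rightarrow> 'm)
                       \<Rightarrow> ('o \<Rightarrow> 'o \<Rightarrow> 'p \<Rightarrow> 'm) \<Rightarrow> bool" where
  "has_AC D eps1 eps2 \<longleftrightarrow> (\<forall>A \<Gamma>. \<not> stable_initial D A \<longrightarrow>
     (\<forall>\<psi>\<in>Pr D (prd D \<Gamma> A). eps1 \<Gamma> A \<psi> \<in> hom D \<Gamma> A
        \<and> (\<forall>\<phi>\<in>Pr D \<Gamma>. leq D \<Gamma> (rdx D (pair D (idn D \<Gamma>) (eps1 \<Gamma> A \<psi>)) \<psi>) \<phi>
                         \<longleftrightarrow> leq D (prd D \<Gamma> A) \<psi> (rdx D (pr1 D \<Gamma> A) \<phi>)))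
   \<and> (\<forall>\<psi>\<in>Pr D (prd D A \<Gamma>). eps2 A \<Gamma> \<psi> \<in> hom D \<Gamma> A
        \<and> (\<forall>\<phi>\<in>Pr D \<Gamma>. leq D \<Gamma> (rdx D (pair D (eps2 A \<Gamma> \<psi>) (idn D \<Gamma>)) \<psi>) \<phi>
                         \<longleftrightarrow> leq D (prd D A \<Gamma>) \<psi> (rdx D (pr2 D A \<Gamma>) \<phi>))))"

text \<open>Co-comprehension: cc A \<alpha> is the chosen arrow \<lceil>\<alpha>\<rceil> : {\<alpha>}^o \<rightarrow> A.\<close>
definition has_cocomp :: "('o, 'm, 'p, 'z) doctrine_scheme \<Rightarrow> ('o \<Rightarrow> 'p \<Rightarrow> 'm) \<Rightarrow> bool" where
  "has_cocomp D cc \<longleftrightarrow> (\<forall>A. \<exists>b. po_bot (Pr D A) (leq D A) b)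
   \<and> (\<forall>A. \<forall>\<alpha>\<in>Pr D A. cc A \<alpha> \<in> Ar D \<and> c_cod D (cc A \<alpha>) = A
        \<and> rdx D (cc A \<alpha>) \<alpha> = botP D (c_dom D (cc A \<alpha>))
        \<and> (\<forall>Y f. f \<in> hom D Y A \<and> rdx D f \<alpha> = botP D Y \<longrightarrow>
              (\<exists>!g. g \<in> hom D Y (c_dom D (cc A \<alpha>)) \<and> cmp D (cc A \<alpha>) g = f)))"

definition cocomp_full :: "('o, 'm, 'p, 'z) doctrine_scheme \<Rightarrow> ('o \<Rightarrow> 'p \<Rightarrow> 'm) \<Rightarrow> bool" where
  "cocomp_full D cc \<longleftrightarrow> (\<forall>A. \<forall>\<alpha>\<in>Pr D A. \<forall>\<beta>\<in>Pr D A.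
      (\<exists>g. g \<in> hom D (c_dom D (cc A \<beta>)) (c_dom D (cc A \<alpha>)) \<and> cmp D (cc A \<alpha>) g = cc A \<beta>)
      \<longrightarrow> leq D A \<alpha> \<beta>)"

text \<open>For \<alpha> \<in> P(A), \<G>(\<lceil>\<alpha>\<rceil>) \<in> P({\<alpha>}^o \<times> A) and
  \<epsilon>_{\<G>(\<lceil>\<alpha>\<rceil>)} : A \<rightarrow> {\<alpha>}^o is the (swapped-factor) AC witness; it is only
  provided by AC when {\<alpha>}^o is not stable initial, so the equation is required
  whenever both sides are defined.\<close>
definition eaco_cond :: "('o, 'm, 'p, 'z) doctrine_scheme \<Rightarrow> ('o \<Rightarrow> 'p)
                        \<Rightarrow> ('o \<Rightarrow> 'p \<Rightarrow> 'm) \<Rightarrow> ('o \<Rightarrow> 'o \<Rightarrow> 'p \<Rightarrow> 'm) \<Rightarrow> bool" where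
  "eaco_cond D \<delta> cc eps2 \<longleftrightarrow> (\<forall>f\<in>Ar D. \<forall>\<alpha>\<in>Pr D (c_cod D f).
     (let A = c_cod D f; X = c_dom D f;
          O1 = c_dom D (cc A \<alpha>); G1 = grph D \<delta> (cc A \<alpha>);
          \<beta> = rdx D f \<alpha>;
          O2 = c_dom D (cc X \<beta>); G2 = grph D \<delta> (cc X \<beta>)
      in \<not> stable_initial D O1 \<and> \<not> stable_initial D O2 \<longrightarrow>
         rdx D f (rdx D (pair D (eps2 O1 A G1) (idn D A)) G1)
         = rdx D (pair D (eps2 O2 X G2) (idn D X)) G2))"

definition higher_order :: "('o, 'm, 'p, 'z) doctrine_scheme \<Rightarrow> bool" where
  "higher_order D \<longleftrightarrow> (\<forall>A. \<exists>PA. \<exists>mem\<in>Pr D (prd D A PA).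
     \<forall>Y. \<forall>\<phi>\<in>Pr D (prd D A Y). \<exists>\<chi>\<in>hom D Y PA.
        \<phi> = rdx D (pair D (pr1 D A Y) (cmp D \<chi> (pr2 D A Y))) mem)"

definition is_heaco :: "('o, 'm, 'p, 'z) doctrine_scheme \<Rightarrow> ('o \<Rightarrow> 'p) \<Rightarrow> ('o \<Rightarrow> 'p \<Rightarrow> 'm)
                        \<Rightarrow> ('o \<Rightarrow> 'o \<Rightarrow> 'p \<Rightarrow> 'm) \<Rightarrow> ('o \<Rightarrow> 'o \<Rightarrow> 'p \<Rightarrow> 'm) \<Rightarrow> bool" where
  "is_heaco D \<delta> cc eps1 eps2 \<longleftrightarrow> is_elementary D \<delta> \<and> has_cocomp D cc \<and> cocomp_full D cc
     \<and> has_AC D eps1 eps2 \<and> eaco_cond D \<delta> cc eps2 \<and> higher_order D"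

end

theory Submission
  imports Defs
begin

text \<open>Each P(A) is in fact a Boolean algebra. The pseudocomplement of \<alpha> is the image of
  its co-comprehension \<lceil>\<alpha>\<rceil>, computed with AC as the existential quantification of the
  graph of \<lceil>\<alpha>\<rceil>. Fullness gives \<beta> \<le> \<alpha> iff \<lceil>\<alpha>\<rceil>*\<beta> = \<bottom>, and the
  adjunction gives \<not>\<alpha> \<le> \<phi> iff \<lceil>\<alpha>\<rceil>*\<phi> is the top element; the substitutivity of
  equality then yields \<not>\<alpha> \<and> \<alpha> = \<bottom>, that \<not>\<alpha> is the largest element disjoint
  from \<alpha>, and \<not>\<not>\<alpha> = \<alpha>. A meet-semilattice with bottom and an involutive
  pseudocomplement has joins x \<or> y = \<not>(\<not>x \<and> \<not>y), and its opposite is a Heyting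
  algebra with implication y \<and> \<not>x.\<close>

section \<open>Involutive pseudocomplements\<close>

locale involutive_pseudocomplemented =
  fixes S :: "'a set" and r :: "'a \<Rightarrow> 'a \<Rightarrow> bool" (infix "\<preceq>" 50)
    and b :: 'a and p :: "'a \<Rightarrow> 'a"
  assumes partial_order: "po_on S r"
    and bot_in: "b \<in> S" and bot_le: "x \<in> S \<Longrightarrow> b \<preceq> x"
    and meet_exists: "x \<in> S \<Longrightarrow> y \<in> S \<Longrightarrow> \<exists>z. po_glb S r x y z"
    and p_in: "x \<in> S \<Longrightarrow> p x \<in> S"
    and le_p_iff: "x \<in> S \<Longrightarrow> y \<in> S \<Longrightarrow> y \<preceq> p x \<longleftrightarrow> (\<forall>z\<in>S. z \<preceq> y \<longrightarrow> z \<preceq> x \<longrightarrow> z \<preceq> b)"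
    and p_p_le: "x \<in> S \<Longrightarrow> p (p x) \<preceq> x"
begin

lemma refl: "x \<in> S \<Longrightarrow> x \<preceq> x"
  using partial_order unfolding po_on_def by blast

lemma antisym: "x \<in> S \<Longrightarrow> y \<in> S \<Longrightarrow> x \<preceq> y \<Longrightarrow> y \<preceq> x \<Longrightarrow> x = y"
  using partial_order unfolding po_on_def by blast

lemma trans: "x \<in> S \<Longrightarrow> y \<in> S \<Longrightarrow> z \<in> S \<Longrightarrow> x \<preceq> y \<Longrightarrow> y \<preceq> z \<Longrightarrow> x \<preceq> z"
  using partial_order unfolding po_on_def by blast

definition meet :: "'a \<Rightarrow> 'a \<Rightarrow> 'a" where
  "meet x y = (SOME z. po_glb S r x y z)"

lemma meet_glb: "x \<in> S \<Longrightarrow> y \<in> S \<Longrightarrow> po_glb S r x y (meet x y)"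
  unfolding meet_def using meet_exists by (rule someI_ex)

lemma meet_in: "x \<in> S \<Longrightarrow> y \<in> S \<Longrightarrow> meet x y \<in> S"
  and meet_le1: "x \<in> S \<Longrightarrow> y \<in> S \<Longrightarrow> meet x y \<preceq> x"
  and meet_le2: "x \<in> S \<Longrightarrow> y \<in> S \<Longrightarrow> meet x y \<preceq> y"
  and le_meet: "x \<in> S \<Longrightarrow> y \<in> S \<Longrightarrow> w \<in> S \<Longrightarrow> w \<preceq> x \<Longrightarrow> w \<preceq> y \<Longrightarrow> w \<preceq> meet x y"
  using meet_glb unfolding po_glb_def by blast+

lemma le_pI: "x \<in> S \<Longrightarrow> y \<in> S \<Longrightarrow> (\<And>z. z \<in> S \<Longrightarrow> z \<preceq> y \<Longrightarrow> z \<preceq> x \<Longrightarrow> z \<preceq> b) \<Longrightarrow> y \<preceq> p x"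
  using le_p_iff by blast

lemma le_pD: "x \<in> S \<Longrightarrow> y \<in> S \<Longrightarrow> y \<preceq> p x \<Longrightarrow> z \<in> S \<Longrightarrow> z \<preceq> y \<Longrightarrow> z \<preceq> x \<Longrightarrow> z \<preceq> b"
  using le_p_iff by blast

lemma le_p_le_bot: "x \<in> S \<Longrightarrow> z \<in> S \<Longrightarrow> z \<preceq> p x \<Longrightarrow> z \<preceq> x \<Longrightarrow> z \<preceq> b"
  using le_pD[OF _ p_in refl[OF p_in]] .

lemma p_p: assumes x: "x \<in> S" shows "p (p x) = x"
proof (rule antisym[OF p_in[OF p_in[OF x]] x p_p_le[OF x]])
  show "x \<preceq> p (p x)"
    using le_p_le_bot[OF x] by (intro le_pI[OF p_in[OF x] x]) blast
qed

lemma p_antitone: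
  assumes x: "x \<in> S" and w: "w \<in> S" and xw: "x \<preceq> w"
  shows "p w \<preceq> p x"
proof (rule le_pI[OF x p_in[OF w]])
  fix z assume z: "z \<in> S" "z \<preceq> p w" "z \<preceq> x"
  show "z \<preceq> b" using le_p_le_bot[OF w z(1,2) trans[OF z(1) x w z(3) xw]] .
qed

definition join :: "'a \<Rightarrow> 'a \<Rightarrow> 'a" where
  "join x y = p (meet (p x) (p y))"

lemma join_in: "x \<in> S \<Longrightarrow> y \<in> S \<Longrightarrow> join x y \<in> S"
  unfolding join_def by (simp add: meet_in p_in)

lemma join_ge1:
  assumes x: "x \<in> S" and y: "y \<in> S" shows "x \<preceq> join x y"
  using p_antitone[OF meet_in[OF p_in[OF x] p_in[OF y]] p_in[OF x] meet_le1[OF p_in[OF x] p_in[OF y]]] p_p[OF x]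
  unfolding join_def by simp

lemma join_ge2:
  assumes x: "x \<in> S" and y: "y \<in> S" shows "y \<preceq> join x y"
  using p_antitone[OF meet_in[OF p_in[OF x] p_in[OF y]] p_in[OF y] meet_le2[OF p_in[OF x] p_in[OF y]]] p_p[OF y]
  unfolding join_def by simp

lemma join_le:
  assumes x: "x \<in> S" and y: "y \<in> S" and w: "w \<in> S" and xw: "x \<preceq> w" and yw: "y \<preceq> w"
  shows "join x y \<preceq> w"
proof -
  have "p w \<preceq> meet (p x) (p y)"
    using le_meet p_in p_antitone x y w xw yw by simp
  then show ?thesis
    unfolding join_def using p_antitone[OF p_in[OF w] meet_in] p_in p_p x y w by metis
qed

lemma join_lub: "x \<in> S \<Longrightarrow> y \<in> S \<Longrightarrow> po_lub S r x y (join x y)"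
  unfolding po_lub_def po_glb_def using join_in join_ge1 join_ge2 join_le by blast

lemma lub_eq_join:
  assumes x: "x \<in> S" and y: "y \<in> S" and M: "po_lub S r x y M"
  shows "M = join x y"
proof -
  have M_in: "M \<in> S" and "x \<preceq> M" "y \<preceq> M"
    and least: "\<And>w. w \<in> S \<Longrightarrow> x \<preceq> w \<Longrightarrow> y \<preceq> w \<Longrightarrow> M \<preceq> w"
    using M unfolding po_lub_def po_glb_def by auto
  then show ?thesis
    using antisym[OF M_in join_in[OF x y]] least[OF join_in[OF x y] join_ge1[OF x y] join_ge2[OF x y]]
      join_le[OF x y M_in] by blast
qed

lemma le_join_iff:
  assumes w: "w \<in> S" and x: "x \<in> S" and y: "y \<in> S"
  shows "y \<preceq> join w x \<longleftrightarrow> meet y (p x) \<preceq> w"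
proof -
  have pw: "p w \<in> S" and px: "p x \<in> S" using p_in w x by auto
  have m: "meet (p w) (p x) \<in> S" and n: "meet y (p x) \<in> S" using meet_in pw px y by auto
  show ?thesis
  proof
    assume le: "y \<preceq> join w x"
    have "meet y (p x) \<preceq> p (p w)"
    proof (rule le_pI[OF pw n])
      fix z assume z: "z \<in> S" "z \<preceq> meet y (p x)" "z \<preceq> p w"
      have "z \<preceq> y" "z \<preceq> p x"
        using trans[OF z(1) n] z(2) meet_le1 meet_le2 y px by blast+
      then show "z \<preceq> b"
        using le_pD[OF m y le[unfolded join_def] z(1)] le_meet[OF pw px z(1) z(3)] by blast
    qed
    then show "meet y (p x) \<preceq> w" using p_p[OF w] by simp
  next
    assume le: "meet y (p x) \<preceq> w"
    show "y \<preceq> join w x" unfolding join_def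
    proof (rule le_pI[OF m y])
      fix z assume z: "z \<in> S" "z \<preceq> y" "z \<preceq> meet (p w) (p x)"
      have "z \<preceq> p w" "z \<preceq> p x"
        using trans[OF z(1) m] z(3) meet_le1 meet_le2 pw px by blast+
      then have "z \<preceq> p (p w)"
        using trans[OF z(1) n w le_meet[OF y px z(1) z(2)] le] p_p[OF w] by simp
      then show "z \<preceq> b" using le_p_le_bot[OF pw z(1)] \<open>z \<preceq> p w\<close> by blast
    qed
  qed
qed

theorem heyting_algebra_dual: "heyting_algebra S (\<lambda>x y. y \<preceq> x)"
  unfolding heyting_algebra_def
proof (intro conjI)
  show "po_on S (\<lambda>x y. y \<preceq> x)" using partial_order unfolding po_on_def by blast
  show "\<exists>t. po_top S (\<lambda>x y. y \<preceq> x) t" unfolding po_top_def using bot_in bot_le by blast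
  show "\<exists>t. po_bot S (\<lambda>x y. y \<preceq> x) t"
    unfolding po_bot_def using p_in[OF bot_in] le_pI[OF bot_in] by blast
  show "\<forall>x\<in>S. \<forall>y\<in>S. \<exists>z. po_glb S (\<lambda>x y. y \<preceq> x) x y z"
    using join_lub unfolding po_lub_def by blast
  show "\<forall>x\<in>S. \<forall>y\<in>S. \<exists>z. po_lub S (\<lambda>x y. y \<preceq> x) x y z"
    using meet_exists unfolding po_lub_def by simp
  show "\<forall>x\<in>S. \<forall>y\<in>S. \<exists>z\<in>S. \<forall>w\<in>S.
          (\<forall>m. po_glb S (\<lambda>x y. y \<preceq> x) w x m \<longrightarrow> y \<preceq> m) \<longleftrightarrow> z \<preceq> w"
  proof (intro ballI bexI)
    fix x y w assume x: "x \<in> S" and y: "y \<in> S" and w: "w \<in> S"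
    have "(\<forall>m. po_lub S r w x m \<longrightarrow> y \<preceq> m) \<longleftrightarrow> y \<preceq> join w x"
      using join_lub[OF w x] lub_eq_join[OF w x] by blast
    then show "(\<forall>m. po_glb S (\<lambda>x y. y \<preceq> x) w x m \<longrightarrow> y \<preceq> m) \<longleftrightarrow> meet y (p x) \<preceq> w"
      using le_join_iff[OF w x y] unfolding po_lub_def by simp
  qed (simp_all add: meet_in p_in)
qed

theorem has_finite_joins: "has_finite_joins S r"
  unfolding has_finite_joins_def po_bot_def using bot_in bot_le join_lub by blast

end

section \<open>Categories with finite products\<close>

locale fp_category =
  fixes C :: "('o, 'm, 'z) fpcat_scheme"
  assumes is_fpcat: "is_fpcat C"
begin

abbreviation comp :: "'m \<Rightarrow> 'm \<Rightarrow> 'm" (infixl "\<cdot>" 55)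
  where "g \<cdot> f \<equiv> cmp C g f"

abbreviation pairing :: "'m \<Rightarrow> 'm \<Rightarrow> 'm" ("\<langle>_, _\<rangle>")
  where "\<langle>f, g\<rangle> \<equiv> pair C f g"

abbreviation prod_obj :: "'o \<Rightarrow> 'o \<Rightarrow> 'o" (infixl "\<otimes>" 70)
  where "A \<otimes> B \<equiv> prd C A B"

abbreviation identity :: "'o \<Rightarrow> 'm" ("\<one>\<^bsub>_\<^esub>" [0] 1000)
  where "\<one>\<^bsub>X\<^esub> \<equiv> idn C X"

abbreviation "\<pi>\<^sub>1 \<equiv> pr1 C"
abbreviation "\<pi>\<^sub>2 \<equiv> pr2 C"

lemma id_hom: "\<one>\<^bsub>X\<^esub> \<in> hom C X X"
  using is_fpcat unfolding is_fpcat_def by blast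

lemma comp_hom: "f \<in> hom C X Y \<Longrightarrow> g \<in> hom C Y Z \<Longrightarrow> g \<cdot> f \<in> hom C X Z"
  using is_fpcat unfolding is_fpcat_def hom_def by auto

lemma comp_assoc:
  "f \<in> hom C X Y \<Longrightarrow> g \<in> hom C Y Z \<Longrightarrow> h \<in> hom C Z W \<Longrightarrow> (h \<cdot> g) \<cdot> f = h \<cdot> (g \<cdot> f)"
  using is_fpcat unfolding is_fpcat_def hom_def by auto

lemma comp_id_right: "f \<in> hom C X Y \<Longrightarrow> f \<cdot> \<one>\<^bsub>X\<^esub> = f"
  using is_fpcat unfolding is_fpcat_def hom_def by auto

lemma comp_id_left: "f \<in> hom C X Y \<Longrightarrow> \<one>\<^bsub>Y\<^esub> \<cdot> f = f"
  using is_fpcat unfolding is_fpcat_def hom_def by auto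

lemma pr1_hom: "\<pi>\<^sub>1 A B \<in> hom C (A \<otimes> B) A"
  and pr2_hom: "\<pi>\<^sub>2 A B \<in> hom C (A \<otimes> B) B"
  using is_fpcat unfolding is_fpcat_def by blast+

lemma pair_hom: "f \<in> hom C Z A \<Longrightarrow> g \<in> hom C Z B \<Longrightarrow> \<langle>f, g\<rangle> \<in> hom C Z (A \<otimes> B)"
  using is_fpcat unfolding is_fpcat_def by blast

lemma pr1_pair: "f \<in> hom C Z A \<Longrightarrow> g \<in> hom C Z B \<Longrightarrow> \<pi>\<^sub>1 A B \<cdot> \<langle>f, g\<rangle> = f"
  and pr2_pair: "f \<in> hom C Z A \<Longrightarrow> g \<in> hom C Z B \<Longrightarrow> \<pi>\<^sub>2 A B \<cdot> \<langle>f, g\<rangle> = g"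
  using is_fpcat unfolding is_fpcat_def by blast+

lemma pair_eta: "h \<in> hom C Z (A \<otimes> B) \<Longrightarrow> h = \<langle>\<pi>\<^sub>1 A B \<cdot> h, \<pi>\<^sub>2 A B \<cdot> h\<rangle>"
  using is_fpcat unfolding is_fpcat_def by blast

lemma pair_comp:
  assumes f: "f \<in> hom C Z A" and g: "g \<in> hom C Z B" and h: "h \<in> hom C W Z"
  shows "\<langle>f, g\<rangle> \<cdot> h = \<langle>f \<cdot> h, g \<cdot> h\<rangle>"
proof -
  have fg: "\<langle>f, g\<rangle> \<in> hom C Z (A \<otimes> B)" using pair_hom[OF f g] .
  have "\<pi>\<^sub>1 A B \<cdot> (\<langle>f, g\<rangle> \<cdot> h) = f \<cdot> h" "\<pi>\<^sub>2 A B \<cdot> (\<langle>f, g\<rangle> \<cdot> h) = g \<cdot> h"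
    using comp_assoc[OF h fg pr1_hom] comp_assoc[OF h fg pr2_hom] pr1_pair[OF f g] pr2_pair[OF f g]
    by simp_all
  then show ?thesis using pair_eta[OF comp_hom[OF h fg]] by simp
qed

lemma pair_pr1_pr2: "\<langle>\<pi>\<^sub>1 A B, \<pi>\<^sub>2 A B\<rangle> = \<one>\<^bsub>A \<otimes> B\<^esub>"
  using pair_eta[OF id_hom] comp_id_right[OF pr1_hom] comp_id_right[OF pr2_hom] by simp

lemma comp_pr1_pair:
  "f \<in> hom C X W \<Longrightarrow> u \<in> hom C Z X \<Longrightarrow> v \<in> hom C Z Y \<Longrightarrow> (f \<cdot> \<pi>\<^sub>1 X Y) \<cdot> \<langle>u, v\<rangle> = f \<cdot> u"
  using comp_assoc[OF pair_hom pr1_hom] pr1_pair by metis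

lemma times_id_hom: "f \<in> hom C X Y \<Longrightarrow> \<langle>f \<cdot> \<pi>\<^sub>1 X B, \<pi>\<^sub>2 X B\<rangle> \<in> hom C (X \<otimes> B) (Y \<otimes> B)"
  using pair_hom[OF comp_hom[OF pr1_hom] pr2_hom] .

lemma times_id_comp_pair:
  assumes f: "f \<in> hom C X Y" and u: "u \<in> hom C Z X" and w: "w \<in> hom C Z B"
  shows "\<langle>f \<cdot> \<pi>\<^sub>1 X B, \<pi>\<^sub>2 X B\<rangle> \<cdot> \<langle>u, w\<rangle> = \<langle>f \<cdot> u, w\<rangle>"
  using pair_comp[OF comp_hom[OF pr1_hom f] pr2_hom pair_hom[OF u w]] comp_pr1_pair[OF f u w]
    pr2_pair[OF u w] by simp

text \<open>Y is a retract of Y \<times> I \<cong> I, and arrows out of the initial object I are unique.\<close>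
lemma hom_eq_if_hom_to_stable_initial:
  assumes si: "stable_initial C I" and s: "s \<in> hom C Y I"
    and h1: "h1 \<in> hom C Y X" and h2: "h2 \<in> hom C Y X"
  shows "h1 = h2"
proof -
  obtain f g where f: "f \<in> hom C (Y \<otimes> I) I" and g: "g \<in> hom C I (Y \<otimes> I)"
    and gf: "g \<cdot> f = \<one>\<^bsub>Y \<otimes> I\<^esub>"
    using si unfolding stable_initial_def c_iso_def by blast
  have ids: "\<langle>\<one>\<^bsub>Y\<^esub>, s\<rangle> \<in> hom C Y (Y \<otimes> I)" using pair_hom[OF id_hom s] .
  define u where "u = f \<cdot> \<langle>\<one>\<^bsub>Y\<^esub>, s\<rangle>"
  define r where "r = \<pi>\<^sub>1 Y I \<cdot> g"
  have u: "u \<in> hom C Y I" unfolding u_def using comp_hom[OF ids f] .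
  have r: "r \<in> hom C I Y" unfolding r_def using comp_hom[OF g pr1_hom] .
  have "r \<cdot> u = \<pi>\<^sub>1 Y I \<cdot> ((g \<cdot> f) \<cdot> \<langle>\<one>\<^bsub>Y\<^esub>, s\<rangle>)"
    unfolding r_def u_def using comp_assoc[OF u g pr1_hom] comp_assoc[OF ids f g] by (simp add: u_def)
  also have "\<dots> = \<one>\<^bsub>Y\<^esub>" using gf comp_id_left[OF ids] pr1_pair[OF id_hom s] by simp
  finally have ru: "r \<cdot> u = \<one>\<^bsub>Y\<^esub>" .
  have "h1 \<cdot> r = h2 \<cdot> r"
    using si comp_hom[OF r h1] comp_hom[OF r h2] unfolding stable_initial_def c_initial_def by blast
  then show ?thesis
    using comp_id_right[OF h1] comp_id_right[OF h2] ru comp_assoc[OF u r h1] comp_assoc[OF u r h2]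
    by metis
qed

end

section \<open>Primary and elementary doctrines\<close>

locale primary_doctrine =
  fixes D :: "('o, 'm, 'p, 'z) doctrine_scheme"
  assumes is_primary: "is_primary D"
begin

sublocale fp_category D
  using is_primary unfolding is_primary_def is_doctrine_def by unfold_locales blast

notation comp (infixl "\<cdot>" 55) and pairing ("\<langle>_, _\<rangle>") and prod_obj (infixl "\<otimes>" 70)
  and identity ("\<one>\<^bsub>_\<^esub>" [0] 1000)

abbreviation leq_at :: "'p \<Rightarrow> 'o \<Rightarrow> 'p \<Rightarrow> bool" ("_ \<sqsubseteq>\<^bsub>_\<^esub> _" [51, 0, 51] 50)
  where "x \<sqsubseteq>\<^bsub>A\<^esub> y \<equiv> leq D A x y"

abbreviation meet_at :: "'p \<Rightarrow> 'o \<Rightarrow> 'p \<Rightarrow> 'p" ("_ \<sqinter>\<^bsub>_\<^esub> _" [70, 0, 71] 70)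
  where "x \<sqinter>\<^bsub>A\<^esub> y \<equiv> meetP D A x y"

abbreviation reindex :: "'m \<Rightarrow> 'p \<Rightarrow> 'p" ("_\<^sup>\<star>" [1000] 1000)
  where "f\<^sup>\<star> \<equiv> rdx D f"

lemma partial_order: "po_on (Pr D A) (leq D A)"
  using is_primary unfolding is_primary_def is_doctrine_def by blast

lemma leq_refl: "x \<in> Pr D A \<Longrightarrow> x \<sqsubseteq>\<^bsub>A\<^esub> x"
  and leq_antisym: "x \<in> Pr D A \<Longrightarrow> y \<in> Pr D A \<Longrightarrow> x \<sqsubseteq>\<^bsub>A\<^esub> y \<Longrightarrow> y \<sqsubseteq>\<^bsub>A\<^esub> x \<Longrightarrow> x = y"
  and leq_trans: "x \<in> Pr D A \<Longrightarrow> y \<in> Pr D A \<Longrightarrow> z \<in> Pr D A \<Longrightarrow>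
    x \<sqsubseteq>\<^bsub>A\<^esub> y \<Longrightarrow> y \<sqsubseteq>\<^bsub>A\<^esub> z \<Longrightarrow> x \<sqsubseteq>\<^bsub>A\<^esub> z"
  using partial_order unfolding po_on_def by blast+

lemma rdx_in: "f \<in> hom D X Y \<Longrightarrow> a \<in> Pr D Y \<Longrightarrow> f\<^sup>\<star> a \<in> Pr D X"
  and rdx_mono: "f \<in> hom D X Y \<Longrightarrow> a \<in> Pr D Y \<Longrightarrow> b \<in> Pr D Y \<Longrightarrow> a \<sqsubseteq>\<^bsub>Y\<^esub> b \<Longrightarrow>
    f\<^sup>\<star> a \<sqsubseteq>\<^bsub>X\<^esub> f\<^sup>\<star> b"
  and rdx_id: "a \<in> Pr D X \<Longrightarrow> (\<one>\<^bsub>X\<^esub>)\<^sup>\<star> a = a"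
  using is_primary unfolding is_primary_def is_doctrine_def hom_def by blast+

lemma rdx_comp: "f \<in> hom D X Y \<Longrightarrow> g \<in> hom D Y Z \<Longrightarrow> a \<in> Pr D Z \<Longrightarrow> (g \<cdot> f)\<^sup>\<star> a = f\<^sup>\<star> (g\<^sup>\<star> a)"
  using is_primary unfolding is_primary_def is_doctrine_def hom_def by auto

lemma meet_glb: "x \<in> Pr D A \<Longrightarrow> y \<in> Pr D A \<Longrightarrow> po_glb (Pr D A) (leq D A) x y (x \<sqinter>\<^bsub>A\<^esub> y)"
proof -
  have unique: "po_glb (Pr D A) (leq D A) x y z \<Longrightarrow> po_glb (Pr D A) (leq D A) x y z' \<Longrightarrow> z = z'"
    for x y z z' unfolding po_glb_def using leq_antisym by blast
  assume "x \<in> Pr D A" "y \<in> Pr D A"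
  then obtain z where z: "po_glb (Pr D A) (leq D A) x y z"
    using is_primary unfolding is_primary_def by blast
  show ?thesis unfolding meetP_def
    by (rule theI[where P = "po_glb (Pr D A) (leq D A) x y", OF z]) (erule unique[OF _ z])
qed

lemma meet_in: "x \<in> Pr D A \<Longrightarrow> y \<in> Pr D A \<Longrightarrow> x \<sqinter>\<^bsub>A\<^esub> y \<in> Pr D A"
  and meet_le1: "x \<in> Pr D A \<Longrightarrow> y \<in> Pr D A \<Longrightarrow> x \<sqinter>\<^bsub>A\<^esub> y \<sqsubseteq>\<^bsub>A\<^esub> x"
  and meet_le2: "x \<in> Pr D A \<Longrightarrow> y \<in> Pr D A \<Longrightarrow> x \<sqinter>\<^bsub>A\<^esub> y \<sqsubseteq>\<^bsub>A\<^esub> y"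
  and le_meet: "x \<in> Pr D A \<Longrightarrow> y \<in> Pr D A \<Longrightarrow> w \<in> Pr D A \<Longrightarrow>
    w \<sqsubseteq>\<^bsub>A\<^esub> x \<Longrightarrow> w \<sqsubseteq>\<^bsub>A\<^esub> y \<Longrightarrow> w \<sqsubseteq>\<^bsub>A\<^esub> x \<sqinter>\<^bsub>A\<^esub> y"
  using meet_glb unfolding po_glb_def by blast+

lemma rdx_meet: "f \<in> hom D X Y \<Longrightarrow> x \<in> Pr D Y \<Longrightarrow> y \<in> Pr D Y \<Longrightarrow>
    f\<^sup>\<star> (x \<sqinter>\<^bsub>Y\<^esub> y) = f\<^sup>\<star> x \<sqinter>\<^bsub>X\<^esub> f\<^sup>\<star> y"
  using is_primary unfolding is_primary_def hom_def by blast

end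

locale elementary_doctrine =
  fixes D :: "('o, 'm, 'p, 'z) doctrine_scheme" and \<delta> :: "'o \<Rightarrow> 'p"
  assumes is_elementary: "is_elementary D \<delta>"
begin

sublocale primary_doctrine D
  using is_elementary unfolding is_elementary_def by unfold_locales blast

notation comp (infixl "\<cdot>" 55) and pairing ("\<langle>_, _\<rangle>") and prod_obj (infixl "\<otimes>" 70)
  and identity ("\<one>\<^bsub>_\<^esub>" [0] 1000) and leq_at ("_ \<sqsubseteq>\<^bsub>_\<^esub> _" [51, 0, 51] 50)
  and meet_at ("_ \<sqinter>\<^bsub>_\<^esub> _" [70, 0, 71] 70) and reindex ("_\<^sup>\<star>" [1000] 1000)

lemma delta_in: "\<delta> A \<in> Pr D (A \<otimes> A)"
  using is_elementary unfolding is_elementary_def by blast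

lemma elementary_adjunction:
  assumes "\<psi> \<in> Pr D (X \<otimes> A)" "\<Phi> \<in> Pr D (X \<otimes> A \<otimes> A)"
  shows "(\<pi>\<^sub>1 (X \<otimes> A) A)\<^sup>\<star> \<psi> \<sqinter>\<^bsub>X \<otimes> A \<otimes> A\<^esub> \<langle>\<pi>\<^sub>2 X A \<cdot> \<pi>\<^sub>1 (X \<otimes> A) A, \<pi>\<^sub>2 (X \<otimes> A) A\<rangle>\<^sup>\<star> (\<delta> A)
           \<sqsubseteq>\<^bsub>X \<otimes> A \<otimes> A\<^esub> \<Phi>
         \<longleftrightarrow> \<psi> \<sqsubseteq>\<^bsub>X \<otimes> A\<^esub> \<langle>\<one>\<^bsub>X \<otimes> A\<^esub>, \<pi>\<^sub>2 X A\<rangle>\<^sup>\<star> \<Phi>"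
  using is_elementary assms unfolding is_elementary_def Let_def by blast

text \<open>Substitutivity of \<delta>, obtained by transposing the pullback of \<theta> to
  (X \<times> A) \<times> A that forgets the middle factor.\<close>
lemma delta_transport:
  assumes \<theta>: "\<theta> \<in> Pr D (X \<otimes> A)" and u: "u \<in> hom D Z X" and v: "v \<in> hom D Z A"
    and w: "w \<in> hom D Z A"
  shows "\<langle>u, v\<rangle>\<^sup>\<star> \<theta> \<sqinter>\<^bsub>Z\<^esub> \<langle>v, w\<rangle>\<^sup>\<star> (\<delta> A) \<sqsubseteq>\<^bsub>Z\<^esub> \<langle>u, w\<rangle>\<^sup>\<star> \<theta>"
proof -
  let ?XA = "X \<otimes> A" and ?XAA = "X \<otimes> A \<otimes> A"
  define p12 where "p12 = \<pi>\<^sub>1 ?XA A"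
  define p23 where "p23 = \<langle>\<pi>\<^sub>2 X A \<cdot> \<pi>\<^sub>1 ?XA A, \<pi>\<^sub>2 ?XA A\<rangle>"
  define p13 where "p13 = \<langle>\<pi>\<^sub>1 X A \<cdot> \<pi>\<^sub>1 ?XA A, \<pi>\<^sub>2 ?XA A\<rangle>"
  define d where "d = \<langle>\<one>\<^bsub>?XA\<^esub>, \<pi>\<^sub>2 X A\<rangle>"
  define h where "h = \<langle>\<langle>u, v\<rangle>, w\<rangle>"
  have uv: "\<langle>u, v\<rangle> \<in> hom D Z ?XA" using pair_hom[OF u v] .
  have h_hom: "h \<in> hom D Z ?XAA" unfolding h_def using pair_hom[OF uv w] .
  have p12_hom: "p12 \<in> hom D ?XAA ?XA" unfolding p12_def by (rule pr1_hom)
  have p23_hom: "p23 \<in> hom D ?XAA (A \<otimes> A)" unfolding p23_def using times_id_hom[OF pr2_hom] .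
  have p13_hom: "p13 \<in> hom D ?XAA ?XA" unfolding p13_def using times_id_hom[OF pr1_hom] .
  have d_hom: "d \<in> hom D ?XA ?XAA" unfolding d_def by (intro pair_hom id_hom pr2_hom)
  have "p13 \<cdot> d = \<one>\<^bsub>?XA\<^esub>"
    unfolding p13_def d_def using times_id_comp_pair[OF pr1_hom id_hom pr2_hom]
      comp_id_right[OF pr1_hom] pair_pr1_pr2 by simp
  then have "d\<^sup>\<star> (p13\<^sup>\<star> \<theta>) = \<theta>" using rdx_comp[OF d_hom p13_hom \<theta>] rdx_id[OF \<theta>] by simp
  then have "p12\<^sup>\<star> \<theta> \<sqinter>\<^bsub>?XAA\<^esub> p23\<^sup>\<star> (\<delta> A) \<sqsubseteq>\<^bsub>?XAA\<^esub> p13\<^sup>\<star> \<theta>"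
    using elementary_adjunction[OF \<theta> rdx_in[OF p13_hom \<theta>]] leq_refl[OF \<theta>]
    unfolding p12_def p23_def d_def by simp
  then have "h\<^sup>\<star> (p12\<^sup>\<star> \<theta> \<sqinter>\<^bsub>?XAA\<^esub> p23\<^sup>\<star> (\<delta> A)) \<sqsubseteq>\<^bsub>Z\<^esub> h\<^sup>\<star> (p13\<^sup>\<star> \<theta>)"
    by (intro rdx_mono[OF h_hom] meet_in rdx_in[OF p12_hom \<theta>] rdx_in[OF p23_hom delta_in]
        rdx_in[OF p13_hom \<theta>])
  moreover have "p12 \<cdot> h = \<langle>u, v\<rangle>" unfolding p12_def h_def using pr1_pair[OF uv w] .
  moreover have "p23 \<cdot> h = \<langle>v, w\<rangle>" "p13 \<cdot> h = \<langle>u, w\<rangle>"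
    unfolding p23_def p13_def h_def
    using times_id_comp_pair[OF pr2_hom uv w] times_id_comp_pair[OF pr1_hom uv w]
      pr1_pair[OF u v] pr2_pair[OF u v] by simp_all
  ultimately show ?thesis
    using rdx_meet[OF h_hom rdx_in[OF p12_hom \<theta>] rdx_in[OF p23_hom delta_in]]
      rdx_comp[OF h_hom p12_hom \<theta>] rdx_comp[OF h_hom p23_hom delta_in] rdx_comp[OF h_hom p13_hom \<theta>]
    by simp
qed

lemma delta_refl:
  assumes f: "f \<in> hom D Z A" and x: "x \<in> Pr D Z"
  shows "x \<sqsubseteq>\<^bsub>Z\<^esub> \<langle>f, f\<rangle>\<^sup>\<star> (\<delta> A)"
proof -
  let ?ZA = "Z \<otimes> A" and ?ZAA = "Z \<otimes> A \<otimes> A"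
  define p23 where "p23 = \<langle>\<pi>\<^sub>2 Z A \<cdot> \<pi>\<^sub>1 ?ZA A, \<pi>\<^sub>2 ?ZA A\<rangle>"
  define d where "d = \<langle>\<one>\<^bsub>?ZA\<^esub>, \<pi>\<^sub>2 Z A\<rangle>"
  define k where "k = \<langle>\<one>\<^bsub>Z\<^esub>, f\<rangle>"
  define \<psi> where "\<psi> = (\<pi>\<^sub>1 Z A)\<^sup>\<star> x"
  define \<Phi> where "\<Phi> = (\<pi>\<^sub>1 ?ZA A)\<^sup>\<star> \<psi> \<sqinter>\<^bsub>?ZAA\<^esub> p23\<^sup>\<star> (\<delta> A)"
  have p23_hom: "p23 \<in> hom D ?ZAA (A \<otimes> A)" unfolding p23_def using times_id_hom[OF pr2_hom] .
  have d_hom: "d \<in> hom D ?ZA ?ZAA" unfolding d_def by (intro pair_hom id_hom pr2_hom)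
  have k_hom: "k \<in> hom D Z ?ZA" unfolding k_def using pair_hom[OF id_hom f] .
  have diag_hom: "\<langle>\<pi>\<^sub>2 Z A, \<pi>\<^sub>2 Z A\<rangle> \<in> hom D ?ZA (A \<otimes> A)" by (intro pair_hom pr2_hom)
  have \<psi>: "\<psi> \<in> Pr D ?ZA" unfolding \<psi>_def using rdx_in[OF pr1_hom x] .
  have \<delta>23: "p23\<^sup>\<star> (\<delta> A) \<in> Pr D ?ZAA" using rdx_in[OF p23_hom delta_in] .
  have \<Phi>: "\<Phi> \<in> Pr D ?ZAA" unfolding \<Phi>_def using meet_in[OF rdx_in[OF pr1_hom \<psi>] \<delta>23] .
  have "\<psi> \<sqsubseteq>\<^bsub>?ZA\<^esub> d\<^sup>\<star> \<Phi>"
    using elementary_adjunction[OF \<psi> \<Phi>] leq_refl[OF \<Phi>] unfolding \<Phi>_def p23_def d_def by simp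
  moreover have "d\<^sup>\<star> \<Phi> \<sqsubseteq>\<^bsub>?ZA\<^esub> d\<^sup>\<star> (p23\<^sup>\<star> (\<delta> A))"
    unfolding \<Phi>_def by (intro rdx_mono[OF d_hom] meet_in meet_le2 rdx_in[OF pr1_hom \<psi>] \<delta>23)
  moreover have "p23 \<cdot> d = \<langle>\<pi>\<^sub>2 Z A, \<pi>\<^sub>2 Z A\<rangle>"
    unfolding p23_def d_def
    using times_id_comp_pair[OF pr2_hom id_hom pr2_hom] comp_id_right[OF pr2_hom] by simp
  ultimately have "\<psi> \<sqsubseteq>\<^bsub>?ZA\<^esub> \<langle>\<pi>\<^sub>2 Z A, \<pi>\<^sub>2 Z A\<rangle>\<^sup>\<star> (\<delta> A)"
    using leq_trans[OF \<psi> rdx_in[OF d_hom \<Phi>] rdx_in[OF d_hom \<delta>23]] rdx_comp[OF d_hom p23_hom delta_in]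
    by simp
  then have "k\<^sup>\<star> \<psi> \<sqsubseteq>\<^bsub>Z\<^esub> k\<^sup>\<star> (\<langle>\<pi>\<^sub>2 Z A, \<pi>\<^sub>2 Z A\<rangle>\<^sup>\<star> (\<delta> A))"
    by (rule rdx_mono[OF k_hom \<psi> rdx_in[OF diag_hom delta_in]])
  moreover have "k\<^sup>\<star> \<psi> = x"
    unfolding \<psi>_def k_def using rdx_comp[OF k_hom[unfolded k_def] pr1_hom x] pr1_pair[OF id_hom f] rdx_id[OF x]
    by simp
  moreover have "\<langle>\<pi>\<^sub>2 Z A, \<pi>\<^sub>2 Z A\<rangle> \<cdot> k = \<langle>f, f\<rangle>"
    unfolding k_def using pair_comp[OF pr2_hom pr2_hom k_hom[unfolded k_def]] pr2_pair[OF id_hom f] by simp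
  ultimately show ?thesis using rdx_comp[OF k_hom diag_hom delta_in] by simp
qed

lemma delta_subst:
  assumes \<beta>: "\<beta> \<in> Pr D A" and v: "v \<in> hom D Z A" and w: "w \<in> hom D Z A"
  shows "v\<^sup>\<star> \<beta> \<sqinter>\<^bsub>Z\<^esub> \<langle>v, w\<rangle>\<^sup>\<star> (\<delta> A) \<sqsubseteq>\<^bsub>Z\<^esub> w\<^sup>\<star> \<beta>"
proof -
  have "\<langle>\<one>\<^bsub>Z\<^esub>, y\<rangle>\<^sup>\<star> ((\<pi>\<^sub>2 Z A)\<^sup>\<star> \<beta>) = y\<^sup>\<star> \<beta>" if "y \<in> hom D Z A" for y
    using rdx_comp[OF pair_hom[OF id_hom that] pr2_hom \<beta>] pr2_pair[OF id_hom that] by simp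
  then show ?thesis using delta_transport[OF rdx_in[OF pr2_hom \<beta>] id_hom v w] v w by simp
qed

lemma delta_sym:
  assumes v: "v \<in> hom D Z A" and w: "w \<in> hom D Z A"
  shows "\<langle>v, w\<rangle>\<^sup>\<star> (\<delta> A) \<sqsubseteq>\<^bsub>Z\<^esub> \<langle>w, v\<rangle>\<^sup>\<star> (\<delta> A)"
proof -
  define \<theta> where "\<theta> = \<langle>\<pi>\<^sub>2 A A, \<pi>\<^sub>1 A A\<rangle>\<^sup>\<star> (\<delta> A)"
  have swap_hom: "\<langle>\<pi>\<^sub>2 A A, \<pi>\<^sub>1 A A\<rangle> \<in> hom D (A \<otimes> A) (A \<otimes> A)" by (intro pair_hom pr1_hom pr2_hom)
  have \<theta>: "\<theta> \<in> Pr D (A \<otimes> A)" unfolding \<theta>_def using rdx_in[OF swap_hom delta_in] .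
  have swap: "\<langle>x, y\<rangle>\<^sup>\<star> \<theta> = \<langle>y, x\<rangle>\<^sup>\<star> (\<delta> A)" if x: "x \<in> hom D Z A" and y: "y \<in> hom D Z A" for x y
    unfolding \<theta>_def
    using rdx_comp[OF pair_hom[OF x y] swap_hom delta_in] pair_comp[OF pr2_hom pr1_hom pair_hom[OF x y]]
      pr1_pair[OF x y] pr2_pair[OF x y] by simp
  have vw: "\<langle>v, w\<rangle>\<^sup>\<star> (\<delta> A) \<in> Pr D Z" and vv: "\<langle>v, v\<rangle>\<^sup>\<star> (\<delta> A) \<in> Pr D Z"
    and wv: "\<langle>w, v\<rangle>\<^sup>\<star> (\<delta> A) \<in> Pr D Z"
    using rdx_in[OF pair_hom delta_in] v w by blast+
  have "\<langle>v, w\<rangle>\<^sup>\<star> (\<delta> A) \<sqsubseteq>\<^bsub>Z\<^esub> \<langle>v, v\<rangle>\<^sup>\<star> (\<delta> A) \<sqinter>\<^bsub>Z\<^esub> \<langle>v, w\<rangle>\<^sup>\<star> (\<delta> A)"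
    using le_meet[OF vv vw vw delta_refl[OF v vw] leq_refl[OF vw]] .
  moreover have "\<langle>v, v\<rangle>\<^sup>\<star> (\<delta> A) \<sqinter>\<^bsub>Z\<^esub> \<langle>v, w\<rangle>\<^sup>\<star> (\<delta> A) \<sqsubseteq>\<^bsub>Z\<^esub> \<langle>w, v\<rangle>\<^sup>\<star> (\<delta> A)"
    using delta_transport[OF \<theta> v v w] swap[OF v v] swap[OF v w] by simp
  ultimately show ?thesis using leq_trans[OF vw meet_in[OF vv vw] wv] by blast
qed

lemma po_top_diag: "f \<in> hom D Z A \<Longrightarrow> po_top (Pr D Z) (leq D Z) (\<langle>f, f\<rangle>\<^sup>\<star> (\<delta> A))"
  unfolding po_top_def using delta_refl rdx_in[OF pair_hom delta_in] by blast

lemma po_top_rdx: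
  assumes t: "po_top (Pr D Y) (leq D Y) t" and g: "g \<in> hom D X Y"
  shows "po_top (Pr D X) (leq D X) (g\<^sup>\<star> t)"
proof -
  have diag: "\<langle>\<one>\<^bsub>Y\<^esub>, \<one>\<^bsub>Y\<^esub>\<rangle> \<in> hom D Y (Y \<otimes> Y)" by (intro pair_hom id_hom)
  have t_in: "t \<in> Pr D Y" and e: "\<langle>\<one>\<^bsub>Y\<^esub>, \<one>\<^bsub>Y\<^esub>\<rangle>\<^sup>\<star> (\<delta> Y) \<in> Pr D Y"
    using t rdx_in[OF diag delta_in] unfolding po_top_def by blast+
  have "g\<^sup>\<star> (\<langle>\<one>\<^bsub>Y\<^esub>, \<one>\<^bsub>Y\<^esub>\<rangle>\<^sup>\<star> (\<delta> Y)) \<sqsubseteq>\<^bsub>X\<^esub> g\<^sup>\<star> t"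
    using rdx_mono[OF g e t_in] t e unfolding po_top_def by blast
  moreover have "\<langle>\<one>\<^bsub>Y\<^esub>, \<one>\<^bsub>Y\<^esub>\<rangle> \<cdot> g = \<langle>g, g\<rangle>"
    using pair_comp[OF id_hom id_hom g] comp_id_left[OF g] by simp
  ultimately show ?thesis
    using po_top_diag[OF g] rdx_comp[OF g diag delta_in] rdx_in[OF g t_in] rdx_in[OF g e] leq_trans
    unfolding po_top_def by metis
qed

lemma grph_eq: "f \<in> hom D X A \<Longrightarrow> grph D \<delta> f = \<langle>f \<cdot> \<pi>\<^sub>1 X A, \<pi>\<^sub>2 X A\<rangle>\<^sup>\<star> (\<delta> A)"
  unfolding grph_def hom_def by simp

lemma grph_in: "f \<in> hom D X A \<Longrightarrow> grph D \<delta> f \<in> Pr D (X \<otimes> A)"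
  using grph_eq rdx_in[OF times_id_hom delta_in] by simp

lemma grph_le_rdx_pr2_iff:
  assumes f: "f \<in> hom D X A" and \<phi>: "\<phi> \<in> Pr D A"
  shows "grph D \<delta> f \<sqsubseteq>\<^bsub>X \<otimes> A\<^esub> (\<pi>\<^sub>2 X A)\<^sup>\<star> \<phi> \<longleftrightarrow> po_top (Pr D X) (leq D X) (f\<^sup>\<star> \<phi>)"
proof
  assume le: "grph D \<delta> f \<sqsubseteq>\<^bsub>X \<otimes> A\<^esub> (\<pi>\<^sub>2 X A)\<^sup>\<star> \<phi>"
  define k where "k = \<langle>\<one>\<^bsub>X\<^esub>, f\<rangle>"
  have k: "k \<in> hom D X (X \<otimes> A)" unfolding k_def using pair_hom[OF id_hom f] .
  have "\<langle>f \<cdot> \<pi>\<^sub>1 X A, \<pi>\<^sub>2 X A\<rangle> \<cdot> k = \<langle>f, f\<rangle>"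
    unfolding k_def using times_id_comp_pair[OF f id_hom f] comp_id_right[OF f] by simp
  then have "k\<^sup>\<star> (grph D \<delta> f) = \<langle>f, f\<rangle>\<^sup>\<star> (\<delta> A)"
    using grph_eq[OF f] rdx_comp[OF k times_id_hom[OF f] delta_in] by simp
  moreover have "k\<^sup>\<star> ((\<pi>\<^sub>2 X A)\<^sup>\<star> \<phi>) = f\<^sup>\<star> \<phi>"
    unfolding k_def using rdx_comp[OF k[unfolded k_def] pr2_hom \<phi>] pr2_pair[OF id_hom f] by simp
  ultimately have "\<langle>f, f\<rangle>\<^sup>\<star> (\<delta> A) \<sqsubseteq>\<^bsub>X\<^esub> f\<^sup>\<star> \<phi>"
    using rdx_mono[OF k grph_in[OF f] rdx_in[OF pr2_hom \<phi>] le] by simp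
  then show "po_top (Pr D X) (leq D X) (f\<^sup>\<star> \<phi>)"
    using po_top_diag[OF f] rdx_in[OF f \<phi>] leq_trans unfolding po_top_def by blast
next
  assume top: "po_top (Pr D X) (leq D X) (f\<^sup>\<star> \<phi>)"
  have f1: "f \<cdot> \<pi>\<^sub>1 X A \<in> hom D (X \<otimes> A) A" using comp_hom[OF pr1_hom f] .
  have G: "grph D \<delta> f \<in> Pr D (X \<otimes> A)" and \<phi>1: "(f \<cdot> \<pi>\<^sub>1 X A)\<^sup>\<star> \<phi> \<in> Pr D (X \<otimes> A)"
    using grph_in[OF f] rdx_in[OF f1 \<phi>] .
  have "po_top (Pr D (X \<otimes> A)) (leq D (X \<otimes> A)) ((f \<cdot> \<pi>\<^sub>1 X A)\<^sup>\<star> \<phi>)"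
    using po_top_rdx[OF top pr1_hom] rdx_comp[OF pr1_hom f \<phi>] by simp
  then have "grph D \<delta> f \<sqsubseteq>\<^bsub>X \<otimes> A\<^esub> (f \<cdot> \<pi>\<^sub>1 X A)\<^sup>\<star> \<phi> \<sqinter>\<^bsub>X \<otimes> A\<^esub> grph D \<delta> f"
    using le_meet[OF \<phi>1 G G] leq_refl[OF G] G unfolding po_top_def by blast
  then show "grph D \<delta> f \<sqsubseteq>\<^bsub>X \<otimes> A\<^esub> (\<pi>\<^sub>2 X A)\<^sup>\<star> \<phi>"
    using leq_trans[OF G meet_in[OF \<phi>1 G] rdx_in[OF pr2_hom \<phi>]] delta_subst[OF \<phi> f1 pr2_hom]
      grph_eq[OF f] by simp
qed

lemma grph_meet_le:
  assumes f: "f \<in> hom D X A" and \<alpha>: "\<alpha> \<in> Pr D A" and \<beta>: "\<beta> \<in> Pr D A"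
    and le: "f\<^sup>\<star> \<alpha> \<sqsubseteq>\<^bsub>X\<^esub> f\<^sup>\<star> \<beta>"
  shows "grph D \<delta> f \<sqinter>\<^bsub>X \<otimes> A\<^esub> (\<pi>\<^sub>2 X A)\<^sup>\<star> \<alpha> \<sqsubseteq>\<^bsub>X \<otimes> A\<^esub> (\<pi>\<^sub>2 X A)\<^sup>\<star> \<beta>"
proof -
  let ?XA = "X \<otimes> A"
  define u where "u = f \<cdot> \<pi>\<^sub>1 X A"
  define v where "v = \<pi>\<^sub>2 X A"
  define \<psi> where "\<psi> = grph D \<delta> f \<sqinter>\<^bsub>?XA\<^esub> v\<^sup>\<star> \<alpha>"
  have u: "u \<in> hom D ?XA A" unfolding u_def using comp_hom[OF pr1_hom f] .
  have v: "v \<in> hom D ?XA A" unfolding v_def by (rule pr2_hom)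
  have G: "grph D \<delta> f = \<langle>u, v\<rangle>\<^sup>\<star> (\<delta> A)" and G_in: "grph D \<delta> f \<in> Pr D ?XA"
    unfolding u_def v_def using grph_eq[OF f] grph_in[OF f] by simp_all
  have va: "v\<^sup>\<star> \<alpha> \<in> Pr D ?XA" and ua: "u\<^sup>\<star> \<alpha> \<in> Pr D ?XA" and ub: "u\<^sup>\<star> \<beta> \<in> Pr D ?XA"
    and vb: "v\<^sup>\<star> \<beta> \<in> Pr D ?XA" using rdx_in u v \<alpha> \<beta> by blast+
  have vu: "\<langle>v, u\<rangle>\<^sup>\<star> (\<delta> A) \<in> Pr D ?XA" using rdx_in[OF pair_hom[OF v u] delta_in] .
  have \<psi>: "\<psi> \<in> Pr D ?XA" unfolding \<psi>_def using meet_in[OF G_in va] .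
  have \<psi>G: "\<psi> \<sqsubseteq>\<^bsub>?XA\<^esub> grph D \<delta> f" and \<psi>v: "\<psi> \<sqsubseteq>\<^bsub>?XA\<^esub> v\<^sup>\<star> \<alpha>"
    unfolding \<psi>_def using meet_le1[OF G_in va] meet_le2[OF G_in va] .
  have "\<psi> \<sqsubseteq>\<^bsub>?XA\<^esub> \<langle>v, u\<rangle>\<^sup>\<star> (\<delta> A)"
    using leq_trans[OF \<psi> G_in vu \<psi>G] delta_sym[OF u v] G by simp
  then have "\<psi> \<sqsubseteq>\<^bsub>?XA\<^esub> u\<^sup>\<star> \<alpha>"
    using leq_trans[OF \<psi> meet_in[OF va vu] ua le_meet[OF va vu \<psi> \<psi>v]] delta_subst[OF \<alpha> v u] by blast
  moreover have "u\<^sup>\<star> \<alpha> \<sqsubseteq>\<^bsub>?XA\<^esub> u\<^sup>\<star> \<beta>"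
    unfolding u_def using rdx_mono[OF pr1_hom rdx_in[OF f \<alpha>] rdx_in[OF f \<beta>] le]
      rdx_comp[OF pr1_hom f \<alpha>] rdx_comp[OF pr1_hom f \<beta>] by simp
  ultimately have "\<psi> \<sqsubseteq>\<^bsub>?XA\<^esub> u\<^sup>\<star> \<beta> \<sqinter>\<^bsub>?XA\<^esub> \<langle>u, v\<rangle>\<^sup>\<star> (\<delta> A)"
    using le_meet[OF ub G_in \<psi> leq_trans[OF \<psi> ua ub] \<psi>G] G by simp
  then show ?thesis
    unfolding \<psi>_def[symmetric] v_def[symmetric]
    using leq_trans[OF \<psi> meet_in[OF ub G_in] vb] delta_subst[OF \<beta> u v] G G_in by simp
qed

end

section \<open>Co-comprehension, choice and the pseudocomplement\<close>

locale cocomprehension_AC_doctrine = elementary_doctrine D \<delta>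
  for D :: "('o, 'm, 'p, 'z) doctrine_scheme" and \<delta> :: "'o \<Rightarrow> 'p" +
  fixes cc :: "'o \<Rightarrow> 'p \<Rightarrow> 'm" and eps1 eps2 :: "'o \<Rightarrow> 'o \<Rightarrow> 'p \<Rightarrow> 'm"
  assumes has_cocomp: "has_cocomp D cc" and cocomp_full: "cocomp_full D cc"
    and has_AC: "has_AC D eps1 eps2"
begin

abbreviation bot_at :: "'o \<Rightarrow> 'p" ("\<bottom>\<^bsub>_\<^esub>" [0] 1000)
  where "\<bottom>\<^bsub>A\<^esub> \<equiv> botP D A"

abbreviation cocomp_obj :: "'o \<Rightarrow> 'p \<Rightarrow> 'o"
  where "cocomp_obj A \<alpha> \<equiv> c_dom D (cc A \<alpha>)"

lemma bot_in: "\<bottom>\<^bsub>A\<^esub> \<in> Pr D A" and bot_le: "x \<in> Pr D A \<Longrightarrow> \<bottom>\<^bsub>A\<^esub> \<sqsubseteq>\<^bsub>A\<^esub> x"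
proof -
  obtain b where b: "po_bot (Pr D A) (leq D A) b" using has_cocomp unfolding has_cocomp_def by blast
  have "po_bot (Pr D A) (leq D A) b' \<Longrightarrow> b' = b" for b'
    using b leq_antisym unfolding po_bot_def by blast
  then have "po_bot (Pr D A) (leq D A) \<bottom>\<^bsub>A\<^esub>"
    unfolding botP_def by (rule theI[where P = "po_bot (Pr D A) (leq D A)", OF b])
  then show "\<bottom>\<^bsub>A\<^esub> \<in> Pr D A" "x \<in> Pr D A \<Longrightarrow> \<bottom>\<^bsub>A\<^esub> \<sqsubseteq>\<^bsub>A\<^esub> x"
    unfolding po_bot_def by blast+
qed

lemma leq_bot_eq: "x \<in> Pr D A \<Longrightarrow> x \<sqsubseteq>\<^bsub>A\<^esub> \<bottom>\<^bsub>A\<^esub> \<Longrightarrow> x = \<bottom>\<^bsub>A\<^esub>"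
  using leq_antisym bot_in bot_le by blast

lemma cc_hom: "\<alpha> \<in> Pr D A \<Longrightarrow> cc A \<alpha> \<in> hom D (cocomp_obj A \<alpha>) A"
  and cc_rdx: "\<alpha> \<in> Pr D A \<Longrightarrow> (cc A \<alpha>)\<^sup>\<star> \<alpha> = \<bottom>\<^bsub>cocomp_obj A \<alpha>\<^esub>"
  and cc_factor: "\<alpha> \<in> Pr D A \<Longrightarrow> f \<in> hom D Y A \<Longrightarrow> f\<^sup>\<star> \<alpha> = \<bottom>\<^bsub>Y\<^esub> \<Longrightarrow>
    \<exists>g. g \<in> hom D Y (cocomp_obj A \<alpha>) \<and> cc A \<alpha> \<cdot> g = f"
  using has_cocomp unfolding has_cocomp_def hom_def by blast+

lemma leq_if_cc_factor: "\<alpha> \<in> Pr D A \<Longrightarrow> \<beta> \<in> Pr D A \<Longrightarrow>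
    g \<in> hom D (cocomp_obj A \<beta>) (cocomp_obj A \<alpha>) \<Longrightarrow> cc A \<alpha> \<cdot> g = cc A \<beta> \<Longrightarrow> \<alpha> \<sqsubseteq>\<^bsub>A\<^esub> \<beta>"
  using cocomp_full unfolding cocomp_full_def by blast

lemma leq_iff_cc_rdx_bot:
  assumes \<alpha>: "\<alpha> \<in> Pr D A" and \<phi>: "\<phi> \<in> Pr D A"
  shows "\<phi> \<sqsubseteq>\<^bsub>A\<^esub> \<alpha> \<longleftrightarrow> (cc A \<alpha>)\<^sup>\<star> \<phi> = \<bottom>\<^bsub>cocomp_obj A \<alpha>\<^esub>"
proof
  assume "\<phi> \<sqsubseteq>\<^bsub>A\<^esub> \<alpha>"
  then show "(cc A \<alpha>)\<^sup>\<star> \<phi> = \<bottom>\<^bsub>cocomp_obj A \<alpha>\<^esub>"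
    using rdx_mono[OF cc_hom[OF \<alpha>] \<phi> \<alpha>] cc_rdx[OF \<alpha>] leq_bot_eq rdx_in[OF cc_hom[OF \<alpha>] \<phi>] by metis
next
  assume "(cc A \<alpha>)\<^sup>\<star> \<phi> = \<bottom>\<^bsub>cocomp_obj A \<alpha>\<^esub>"
  then show "\<phi> \<sqsubseteq>\<^bsub>A\<^esub> \<alpha>" using cc_factor[OF \<phi> cc_hom[OF \<alpha>]] leq_if_cc_factor[OF \<phi> \<alpha>] by blast
qed

lemma cc_rdx_bot: "\<alpha> \<in> Pr D A \<Longrightarrow> (cc A \<alpha>)\<^sup>\<star> \<bottom>\<^bsub>A\<^esub> = \<bottom>\<^bsub>cocomp_obj A \<alpha>\<^esub>"
  using leq_iff_cc_rdx_bot bot_in bot_le by blast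

lemma leq_if_stable_initial:
  assumes I: "stable_initial D I" and \<beta>: "\<beta> \<in> Pr D I" and \<gamma>: "\<gamma> \<in> Pr D I"
  shows "\<beta> \<sqsubseteq>\<^bsub>I\<^esub> \<gamma>"
proof -
  obtain h where h: "h \<in> hom D I (cocomp_obj I \<beta>)"
    using I unfolding stable_initial_def c_initial_def by blast
  have g: "h \<cdot> cc I \<gamma> \<in> hom D (cocomp_obj I \<gamma>) (cocomp_obj I \<beta>)"
    using comp_hom[OF cc_hom[OF \<gamma>] h] .
  have "cc I \<beta> \<cdot> (h \<cdot> cc I \<gamma>) = cc I \<gamma>"
    using hom_eq_if_hom_to_stable_initial[OF I cc_hom[OF \<gamma>] comp_hom[OF g cc_hom[OF \<beta>]] cc_hom[OF \<gamma>]] .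
  then show ?thesis using leq_if_cc_factor[OF \<beta> \<gamma> g] by blast
qed

lemma leq_if_cocomp_obj_stable_initial:
  assumes \<alpha>: "\<alpha> \<in> Pr D A" and I: "stable_initial D (cocomp_obj A \<alpha>)" and \<beta>: "\<beta> \<in> Pr D A"
  shows "\<beta> \<sqsubseteq>\<^bsub>A\<^esub> \<alpha>"
  using leq_if_stable_initial[OF I] rdx_in[OF cc_hom[OF \<alpha>] \<beta>] bot_in leq_antisym leq_iff_cc_rdx_bot[OF \<alpha> \<beta>]
  by blast

lemma AC_swapped:
  assumes "\<not> stable_initial D I" and "\<psi> \<in> Pr D (I \<otimes> A)"
  shows "eps2 I A \<psi> \<in> hom D A I"
    and "\<phi> \<in> Pr D A \<Longrightarrow> \<langle>eps2 I A \<psi>, \<one>\<^bsub>A\<^esub>\<rangle>\<^sup>\<star> \<psi> \<sqsubseteq>\<^bsub>A\<^esub> \<phi> \<longleftrightarrow> \<psi> \<sqsubseteq>\<^bsub>I \<otimes> A\<^esub> (\<pi>\<^sub>2 I A)\<^sup>\<star> \<phi>"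
  using has_AC assms unfolding has_AC_def by blast+

text \<open>Outside the degenerate case this is the term of the eaco condition. AC provides no
  witness when the domain of \<lceil>\<alpha>\<rceil> is stable initial; then \<alpha> is the top element, so its
  pseudocomplement is \<bottom>.\<close>
definition neg :: "'o \<Rightarrow> 'p \<Rightarrow> 'p" where
  "neg A \<alpha> = (if stable_initial D (cocomp_obj A \<alpha>) then \<bottom>\<^bsub>A\<^esub>
     else \<langle>eps2 (cocomp_obj A \<alpha>) A (grph D \<delta> (cc A \<alpha>)), \<one>\<^bsub>A\<^esub>\<rangle>\<^sup>\<star> (grph D \<delta> (cc A \<alpha>)))"

lemma neg_in: "\<alpha> \<in> Pr D A \<Longrightarrow> neg A \<alpha> \<in> Pr D A"
  unfolding neg_def
  using bot_in rdx_in[OF pair_hom[OF AC_swapped(1) id_hom] grph_in[OF cc_hom]] grph_in[OF cc_hom] by auto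

lemma neg_le_iff:
  assumes \<alpha>: "\<alpha> \<in> Pr D A" and I: "\<not> stable_initial D (cocomp_obj A \<alpha>)" and \<phi>: "\<phi> \<in> Pr D A"
  shows "neg A \<alpha> \<sqsubseteq>\<^bsub>A\<^esub> \<phi> \<longleftrightarrow> po_top (Pr D (cocomp_obj A \<alpha>)) (leq D (cocomp_obj A \<alpha>)) ((cc A \<alpha>)\<^sup>\<star> \<phi>)"
  using AC_swapped(2)[OF I grph_in[OF cc_hom[OF \<alpha>]] \<phi>] grph_le_rdx_pr2_iff[OF cc_hom[OF \<alpha>] \<phi>] I
  unfolding neg_def by simp

lemma neg_meet_le_bot:
  assumes \<alpha>: "\<alpha> \<in> Pr D A" shows "neg A \<alpha> \<sqinter>\<^bsub>A\<^esub> \<alpha> \<sqsubseteq>\<^bsub>A\<^esub> \<bottom>\<^bsub>A\<^esub>"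
proof (cases "stable_initial D (cocomp_obj A \<alpha>)")
  case True
  then show ?thesis using meet_le1[OF bot_in \<alpha>] unfolding neg_def by simp
next
  case False
  let ?I = "cocomp_obj A \<alpha>" and ?G = "grph D \<delta> (cc A \<alpha>)"
  define j where "j = \<langle>eps2 ?I A ?G, \<one>\<^bsub>A\<^esub>\<rangle>"
  have c: "cc A \<alpha> \<in> hom D ?I A" using cc_hom[OF \<alpha>] .
  have G: "?G \<in> Pr D (?I \<otimes> A)" using grph_in[OF c] .
  have j: "j \<in> hom D A (?I \<otimes> A)" unfolding j_def using pair_hom[OF AC_swapped(1)[OF False G] id_hom] .
  have j_pr2: "j\<^sup>\<star> ((\<pi>\<^sub>2 ?I A)\<^sup>\<star> x) = x" if "x \<in> Pr D A" for x
    unfolding j_def using rdx_comp[OF j[unfolded j_def] pr2_hom that] rdx_id[OF that]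
      pr2_pair[OF AC_swapped(1)[OF False G] id_hom] by simp
  have \<alpha>2: "(\<pi>\<^sub>2 ?I A)\<^sup>\<star> \<alpha> \<in> Pr D (?I \<otimes> A)" and bot2: "(\<pi>\<^sub>2 ?I A)\<^sup>\<star> \<bottom>\<^bsub>A\<^esub> \<in> Pr D (?I \<otimes> A)"
    using rdx_in[OF pr2_hom] \<alpha> bot_in by blast+
  have "?G \<sqinter>\<^bsub>?I \<otimes> A\<^esub> (\<pi>\<^sub>2 ?I A)\<^sup>\<star> \<alpha> \<sqsubseteq>\<^bsub>?I \<otimes> A\<^esub> (\<pi>\<^sub>2 ?I A)\<^sup>\<star> \<bottom>\<^bsub>A\<^esub>"
    using grph_meet_le[OF c \<alpha> bot_in] cc_rdx[OF \<alpha>] cc_rdx_bot[OF \<alpha>] leq_refl bot_in by simp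
  from rdx_mono[OF j meet_in[OF G \<alpha>2] bot2 this] show ?thesis
    using rdx_meet[OF j G \<alpha>2] j_pr2[OF \<alpha>] j_pr2[OF bot_in] False unfolding neg_def j_def by simp
qed

lemma neg_disjoint:
  assumes \<alpha>: "\<alpha> \<in> Pr D A" and b: "b \<in> Pr D A" and z: "z \<in> Pr D A"
    and bn: "b \<sqsubseteq>\<^bsub>A\<^esub> neg A \<alpha>" and zb: "z \<sqsubseteq>\<^bsub>A\<^esub> b" and z\<alpha>: "z \<sqsubseteq>\<^bsub>A\<^esub> \<alpha>"
  shows "z \<sqsubseteq>\<^bsub>A\<^esub> \<bottom>\<^bsub>A\<^esub>"
proof -
  have n: "neg A \<alpha> \<in> Pr D A" using neg_in[OF \<alpha>] .
  have "z \<sqsubseteq>\<^bsub>A\<^esub> neg A \<alpha> \<sqinter>\<^bsub>A\<^esub> \<alpha>"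
    using le_meet[OF n \<alpha> z leq_trans[OF z b n zb bn] z\<alpha>] .
  then show ?thesis using leq_trans[OF z meet_in[OF n \<alpha>] bot_in] neg_meet_le_bot[OF \<alpha>] by blast
qed

lemma leq_if_cc_rdx_top_disjoint:
  assumes \<gamma>: "\<gamma> \<in> Pr D A" and b: "b \<in> Pr D A" and t: "t \<in> Pr D A"
    and top: "po_top (Pr D (cocomp_obj A \<gamma>)) (leq D (cocomp_obj A \<gamma>)) ((cc A \<gamma>)\<^sup>\<star> t)"
    and disj: "b \<sqinter>\<^bsub>A\<^esub> t \<sqsubseteq>\<^bsub>A\<^esub> \<bottom>\<^bsub>A\<^esub>"
  shows "b \<sqsubseteq>\<^bsub>A\<^esub> \<gamma>"
proof -
  let ?I = "cocomp_obj A \<gamma>"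
  have c: "cc A \<gamma> \<in> hom D ?I A" using cc_hom[OF \<gamma>] .
  have cb: "(cc A \<gamma>)\<^sup>\<star> b \<in> Pr D ?I" and ct: "(cc A \<gamma>)\<^sup>\<star> t \<in> Pr D ?I"
    and m: "b \<sqinter>\<^bsub>A\<^esub> t \<in> Pr D A" using rdx_in[OF c] b t meet_in by blast+
  have "(cc A \<gamma>)\<^sup>\<star> b \<sqsubseteq>\<^bsub>?I\<^esub> (cc A \<gamma>)\<^sup>\<star> (b \<sqinter>\<^bsub>A\<^esub> t)"
    using le_meet[OF cb ct cb leq_refl[OF cb]] top cb rdx_meet[OF c b t] unfolding po_top_def by simp
  moreover have "(cc A \<gamma>)\<^sup>\<star> (b \<sqinter>\<^bsub>A\<^esub> t) \<sqsubseteq>\<^bsub>?I\<^esub> \<bottom>\<^bsub>?I\<^esub>"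
    using rdx_mono[OF c m bot_in disj] cc_rdx_bot[OF \<gamma>] by simp
  ultimately have "(cc A \<gamma>)\<^sup>\<star> b = \<bottom>\<^bsub>?I\<^esub>"
    using leq_bot_eq[OF cb] leq_trans[OF cb rdx_in[OF c m] bot_in] by blast
  then show ?thesis using leq_iff_cc_rdx_bot[OF \<gamma> b] by simp
qed

lemma neg_neg_le:
  assumes \<alpha>: "\<alpha> \<in> Pr D A" shows "neg A (neg A \<alpha>) \<sqsubseteq>\<^bsub>A\<^esub> \<alpha>"
proof (cases "stable_initial D (cocomp_obj A \<alpha>)")
  case True
  then show ?thesis by (rule leq_if_cocomp_obj_stable_initial[OF \<alpha> _ neg_in[OF neg_in[OF \<alpha>]]])
next
  case False
  have n: "neg A \<alpha> \<in> Pr D A" and nn: "neg A (neg A \<alpha>) \<in> Pr D A" using neg_in \<alpha> by blast+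
  show ?thesis
  proof (rule leq_if_cc_rdx_top_disjoint[OF \<alpha> nn n])
    show "po_top (Pr D (cocomp_obj A \<alpha>)) (leq D (cocomp_obj A \<alpha>)) ((cc A \<alpha>)\<^sup>\<star> (neg A \<alpha>))"
      using neg_le_iff[OF \<alpha> False n] leq_refl[OF n] by (rule iffD1)
    show "neg A (neg A \<alpha>) \<sqinter>\<^bsub>A\<^esub> neg A \<alpha> \<sqsubseteq>\<^bsub>A\<^esub> \<bottom>\<^bsub>A\<^esub>"
      using neg_meet_le_bot[OF n] .
  qed
qed

lemma le_negI:
  assumes \<alpha>: "\<alpha> \<in> Pr D A" and b: "b \<in> Pr D A"
    and disj: "\<And>z. z \<in> Pr D A \<Longrightarrow> z \<sqsubseteq>\<^bsub>A\<^esub> b \<Longrightarrow> z \<sqsubseteq>\<^bsub>A\<^esub> \<alpha> \<Longrightarrow> z \<sqsubseteq>\<^bsub>A\<^esub> \<bottom>\<^bsub>A\<^esub>"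
  shows "b \<sqsubseteq>\<^bsub>A\<^esub> neg A \<alpha>"
proof (cases "stable_initial D (cocomp_obj A (neg A \<alpha>))")
  case True
  then show ?thesis by (rule leq_if_cocomp_obj_stable_initial[OF neg_in[OF \<alpha>] _ b])
next
  case False
  show ?thesis
  proof (rule leq_if_cc_rdx_top_disjoint[OF neg_in[OF \<alpha>] b \<alpha>])
    show "po_top (Pr D (cocomp_obj A (neg A \<alpha>))) (leq D (cocomp_obj A (neg A \<alpha>)))
        ((cc A (neg A \<alpha>))\<^sup>\<star> \<alpha>)"
      using neg_le_iff[OF neg_in[OF \<alpha>] False \<alpha>] neg_neg_le[OF \<alpha>] by (rule iffD1)
    show "b \<sqinter>\<^bsub>A\<^esub> \<alpha> \<sqsubseteq>\<^bsub>A\<^esub> \<bottom>\<^bsub>A\<^esub>"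
      using disj[OF meet_in[OF b \<alpha>] meet_le1[OF b \<alpha>] meet_le2[OF b \<alpha>]] .
  qed
qed

lemma involutive_pseudocomplemented: "involutive_pseudocomplemented (Pr D A) (leq D A) \<bottom>\<^bsub>A\<^esub> (neg A)"
proof
  fix x y assume x: "x \<in> Pr D A" and y: "y \<in> Pr D A"
  show "\<exists>z. po_glb (Pr D A) (leq D A) x y z" using meet_glb[OF x y] ..
  show "y \<sqsubseteq>\<^bsub>A\<^esub> neg A x \<longleftrightarrow>
      (\<forall>z\<in>Pr D A. z \<sqsubseteq>\<^bsub>A\<^esub> y \<longrightarrow> z \<sqsubseteq>\<^bsub>A\<^esub> x \<longrightarrow> z \<sqsubseteq>\<^bsub>A\<^esub> \<bottom>\<^bsub>A\<^esub>)"
    using neg_disjoint[OF x y] le_negI[OF x y] by blast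
qed (fact partial_order bot_in bot_le neg_in neg_neg_le)+

end

theorem mainTheorem15:
  fixes D :: "('o, 'm, 'p) doctrine"
    and \<delta> :: "'o \<Rightarrow> 'p" and cc :: "'o \<Rightarrow> 'p \<Rightarrow> 'm"
    and eps1 eps2 :: "'o \<Rightarrow> 'o \<Rightarrow> 'p \<Rightarrow> 'm"
  assumes "is_heaco D \<delta> cc eps1 eps2"
  shows "\<forall>A. heyting_algebra (Pr D A) (\<lambda>x y. leq D A y x)
             \<and> has_finite_joins (Pr D A) (leq D A)"
proof
  fix A
  interpret cocomprehension_AC_doctrine D \<delta> cc eps1 eps2
    using assms unfolding is_heaco_def by unfold_locales blast+
  interpret involutive_pseudocomplemented "Pr D A" "leq D A" "botP D A" "neg A"
    by (rule involutive_pseudocomplemented)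
  show "heyting_algebra (Pr D A) (\<lambda>x y. leq D A y x) \<and> has_finite_joins (Pr D A) (leq D A)"
    using heyting_algebra_dual has_finite_joins by blast
qed

end
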